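(* Let $X$ be a Calabi–Yau 4-fold, $\beta\in H_2(X,\mathbb{Z})$ and $\alpha\in H^2(X)$ with $\alpha\cdot\beta=0$. Then the identity \[ n_{0,\beta}(\alpha^2)=\frac{1}{2}\sum_{\substack{\beta_1+\beta_2=\beta\\ \beta_1,\beta_2>0}}(\alpha\cdot\beta_1)(\alpha\cdot\beta_2)\,m_{\beta_1,\beta_2} \] is equivalent to the identity \[ n_{0,\beta}(\alpha^2)=\frac{1}{2}\sum_{\substack{k_1,k_2\in\mathbb{Z}_{>0}\\ \gcd(k_1,k_2)=1}}\ \sum_{\substack{\beta_1+\beta_2=\beta\\ k_1\mid\beta_1,\ k_2\mid\beta_2}}\ \sum_{a,b}\frac{(\alpha\cdot\beta_1)(\alpha\cdot\beta_2)}{k_1^2k_2^2}\,n_{0,\beta_1/k_1}(S_a)\,g^{ab}\,n_{0,\beta_2/k_2}(S_b), \] where $\{S_a\}$ is a basis of the free part of $H^4(X,\mathbb{Z})$.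
   Context: A Calabi–Yau 4-fold is a smooth complex projective 4-fold with $K_X\cong\mathcal{O}_X$. Fix an ample class; $\beta>0$ means nonzero of positive degree; sums over $\beta_1+\beta_2=\beta$ run over $\beta_1,\beta_2>0$, and $k\mid\beta_i$ means $\beta_i/k\in H_2(X,\mathbb{Z})$. $\mathrm{GW}_{0,\beta}(\gamma)=\int_{[\overline{M}_{0,1}(X,\beta)]^{\mathrm{vir}}}\mathrm{ev}^*\gamma$ for $\gamma\in H^4(X)$, and $n_{0,\beta}(\gamma)$ is defined by $\sum_{\beta>0}\mathrm{GW}_{0,\beta}(\gamma)q^\beta=\sum_{\beta>0}n_{0,\beta}(\gamma)\sum_{d\ge1}d^{-2}q^{d\beta}$ (extended linearly in $\gamma$). $\sum_{a,b}g^{ab}S_a\otimes S_b$ is the Künneth decomposition of the $(4,4)$-component of the diagonal class mod torsion, i.e. $(g^{ab})$ is the inverse of $(g_{ab})=(\int_XS_aS_b)$. The meeting invariants $m_{\beta_1,\beta_2}$ are determined by: symmetry; $m_{\beta_1,\beta_2}=0$ if $\deg\beta_1\le0$ or $\deg\beta_2\le0$; for $\beta_1\ne\beta_2$, $m_{\beta_1,\beta_2}=\sum n_{0,\beta_1}(S_a)g^{ab}n_{0,\beta_2}(S_b)+m_{\beta_1,\beta_2-\beta_1}+m_{\beta_1-\beta_2,\beta_2}$; $m_{\beta,\beta}=n_{0,\beta}(c_2(X))+\sum n_{0,\beta}(S_a)g^{ab}n_{0,\beta}(S_b)-\sum_{\beta_1+\beta_2=\beta}m_{\beta_1,\beta_2}$.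 *)

theory Defs
  imports "HOL-Analysis.Analysis"
begin

text \<open>H_2(X,Z) is an abelian group 'h; the degree w.r.t. the fixed ample class is an additive
  map deg :: 'h => int; the basis S_a of the free part of H^4(X,Z) is indexed by a finite
  type 'a, and classes of H^4(X) are given by their coordinates 'a => real.
  N beta a stands for n_{0,beta}(S_a).\<close>

primrec scaleN :: "nat \<Rightarrow> 'h::ab_group_add \<Rightarrow> 'h" where
  "scaleN 0 x = 0"
| "scaleN (Suc k) x = x + scaleN k x"

definition pos :: "('h::ab_group_add \<Rightarrow> int) \<Rightarrow> 'h \<Rightarrow> bool" where
  "pos deg x \<longleftrightarrow> x \<noteq> 0 \<and> deg x > 0"

text \<open>n_{0,beta}(gamma), extended linearly in gamma = sum_a gamma_a S_a.\<close>
definition nGW :: "('h \<Rightarrow> 'a::finite \<Rightarrow> real) \<Rightarrow> 'h \<Rightarrow> ('a \<Rightarrow> real) \<Rightarrow> real" where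
  "nGW N x \<gamma> = (\<Sum>a\<in>UNIV. \<gamma> a * N x a)"

definition ginv :: "real^'a::finite^'a \<Rightarrow> 'a \<Rightarrow> 'a \<Rightarrow> real" where
  "ginv G a b = matrix_inv G $ a $ b"

definition pairing :: "('h \<Rightarrow> 'a::finite \<Rightarrow> real) \<Rightarrow> real^'a^'a \<Rightarrow> 'h \<Rightarrow> 'h \<Rightarrow> real" where
  "pairing N G x y = (\<Sum>a\<in>UNIV. \<Sum>b\<in>UNIV. N x a * ginv G a b * N y b)"

definition meeting_invariants ::
  "('h::ab_group_add \<Rightarrow> int) \<Rightarrow> ('h \<Rightarrow> 'a::finite \<Rightarrow> real) \<Rightarrow> real^'a^'a \<Rightarrow> ('a \<Rightarrow> real)
   \<Rightarrow> ('h \<Rightarrow> 'h \<Rightarrow> real) \<Rightarrow> bool" where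
  "meeting_invariants deg N G c2 m \<longleftrightarrow>
     (\<forall>x y. m x y = m y x) \<and>
     (\<forall>x y. deg x \<le> 0 \<or> deg y \<le> 0 \<longrightarrow> m x y = 0) \<and>
     (\<forall>x y. pos deg x \<longrightarrow> pos deg y \<longrightarrow> x \<noteq> y \<longrightarrow>
        m x y = pairing N G x y + m x (y - x) + m (x - y) y) \<and>
     (\<forall>x. pos deg x \<longrightarrow>
        m x x = nGW N x c2 + pairing N G x x
                - (\<Sum>\<^sub>\<infinity>x1\<in>{x1. pos deg x1 \<and> pos deg (x - x1)}. m x1 (x - x1)))"

end

theory Submission
  imports Defs
begin

(* Write F(p, q) for the sum of (al x)(al y)/(p q) m(x, y) over x, y in E with p x + q y = beta,
   and P(p, q) for the same sum with m(x, y) replaced by the pairing of x and y.  F(1, 1) is the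
   left-hand sum, and the right-hand sum is the sum of P over coprime pairs.
   Because al (p x + q y) = al beta = 0, the recursion m(x, y) = pairing + m(x, y - x) + m(x - y, y)
   becomes, after substituting y + x for y, resp. x + y for x, the recursion
   F(p, q) = P(p, q) + F(p + q, q) + F(p, p + q).  Unfolding it along the Calkin-Wilf tree, whose
   vertices are exactly the coprime pairs, gives the identity; the unfolding stops because
   F(p, q) = 0 once p + q > deg beta.  The substitutions stay inside E because a nonzero term
   (al x)(al y) m(x, y) with p (al x) + q (al y) = 0 forces x and y into E, by induction along the
   same recursion. *)

lemma scaleN_add_left: "scaleN (p + q) x = scaleN p x + scaleN q x"
  by (induction p) (simp_all add: algebra_simps)

lemma scaleN_add_right: "scaleN k (x + y) = scaleN k x + scaleN k y"
  by (induction k) (simp_all add: algebra_simps)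

lemma scaleN_diff_right: "scaleN k (x - y) = scaleN k x - scaleN k y"
  by (induction k) (simp_all add: algebra_simps)

lemma scaleN_eq_of_nat_mult: "scaleN k x = of_nat k * (x :: 'a::ring_1)"
  by (induction k) (simp_all add: algebra_simps)

lemma (in additive) scaleN: "f (scaleN k x) = scaleN k (f x)"
  by (induction k) (simp_all add: zero add)

lemma infsum_eq_sum_on_support:
  assumes "finite S" "S \<subseteq> T" "\<And>x. x \<in> T - S \<Longrightarrow> f x = 0"
  shows "infsum f T = sum f S"
proof -
  have "infsum f T = infsum f S"
    by (rule infsum_cong_neutral) (use assms(2,3) in auto)
  then show ?thesis
    using assms(1) by simp
qed

section \<open>The Calkin-Wilf tree\<close>

definition euclid_step :: "nat \<times> nat \<Rightarrow> nat \<times> nat" where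
  "euclid_step = (\<lambda>(a, b). if b < a then (a - b, b) else if a < b then (a, b - a) else (a, b))"

text \<open>The Calkin-Wilf tree has root \<open>(1, 1)\<close>, and the children of \<open>(p, q)\<close> are \<open>(p + q, q)\<close>
  and \<open>(p, p + q)\<close>; the parent of a vertex is obtained by one subtractive Euclid step.\<close>
definition calkin_wilf_subtree :: "nat \<Rightarrow> nat \<Rightarrow> (nat \<times> nat) set" where
  "calkin_wilf_subtree p q = {(a, b). 0 < a \<and> 0 < b \<and> (\<exists>n. (euclid_step ^^ n) (a, b) = (p, q))}"

lemma euclid_step_sum_le: "fst (euclid_step z) + snd (euclid_step z) \<le> fst z + snd z"
  by (cases z) (auto simp: euclid_step_def)

lemma funpow_euclid_step_sum_le:
  "fst ((euclid_step ^^ n) z) + snd ((euclid_step ^^ n) z) \<le> fst z + snd z"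
  by (induction n) (auto intro: order_trans[OF euclid_step_sum_le])

lemma gcd_euclid_step: "gcd (fst (euclid_step z)) (snd (euclid_step z)) = gcd (fst z) (snd z)"
proof (cases z)
  case (Pair a b)
  then show ?thesis
    by (auto simp: euclid_step_def gcd_diff1_nat gcd.commute[of a] gcd_diff1_nat[of b a])
qed

lemma gcd_funpow_euclid_step:
  "gcd (fst ((euclid_step ^^ n) z)) (snd ((euclid_step ^^ n) z)) = gcd (fst z) (snd z)"
  by (induction n) (simp_all add: gcd_euclid_step)

lemma euclid_step_children:
  assumes "0 < p" "0 < q"
  shows "euclid_step (p + q, q) = (p, q)" "euclid_step (p, p + q) = (p, q)"
  using assms by (simp_all add: euclid_step_def)

lemma euclid_step_eq_imp_child:
  assumes "0 < p" "0 < q" "euclid_step z = (p, q)"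
  shows "z \<in> {(p, q), (p + q, q), (p, p + q)}"
  using assms by (cases z) (auto simp: euclid_step_def split: if_splits)

lemma funpow_euclid_step_eq_imp_child:
  assumes "0 < p" "0 < q"
  shows "(euclid_step ^^ n) z = (p, q) \<Longrightarrow>
    z = (p, q) \<or> (\<exists>j. (euclid_step ^^ j) z \<in> {(p + q, q), (p, p + q)})"
proof (induction n arbitrary: z)
  case 0
  then show ?case by simp
next
  case (Suc n)
  then have "(euclid_step ^^ n) (euclid_step z) = (p, q)"
    by (simp add: funpow_Suc_right del: funpow.simps)
  from Suc.IH[OF this] show ?case
  proof
    assume "euclid_step z = (p, q)"
    then show ?thesis
      using euclid_step_eq_imp_child[OF assms] by (metis funpow_0 insertE)
  next
    assume "\<exists>j. (euclid_step ^^ j) (euclid_step z) \<in> {(p + q, q), (p, p + q)}"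
    then obtain j where "(euclid_step ^^ Suc j) z \<in> {(p + q, q), (p, p + q)}"
      by (auto simp: funpow_Suc_right simp del: funpow.simps)
    then show ?thesis by blast
  qed
qed

lemma sum_le_if_in_calkin_wilf_subtree:
  assumes "(a, b) \<in> calkin_wilf_subtree p q"
  shows "p + q \<le> a + b"
proof -
  obtain n where "(euclid_step ^^ n) (a, b) = (p, q)"
    using assms unfolding calkin_wilf_subtree_def by auto
  then show ?thesis
    using funpow_euclid_step_sum_le[of n "(a, b)"] by simp
qed

lemma calkin_wilf_subtree_unfold:
  assumes "0 < p" "0 < q"
  shows "calkin_wilf_subtree p q =
    insert (p, q) (calkin_wilf_subtree (p + q) q \<union> calkin_wilf_subtree p (p + q))"
proof (intro equalityI subsetI)
  fix z assume "z \<in> calkin_wilf_subtree p q"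
  then obtain a b n where "z = (a, b)" "0 < a" "0 < b" "(euclid_step ^^ n) (a, b) = (p, q)"
    unfolding calkin_wilf_subtree_def by auto
  moreover from funpow_euclid_step_eq_imp_child[OF assms this(4)]
  have "(a, b) = (p, q) \<or> (\<exists>j. (euclid_step ^^ j) (a, b) \<in> {(p + q, q), (p, p + q)})" .
  ultimately show
    "z \<in> insert (p, q) (calkin_wilf_subtree (p + q) q \<union> calkin_wilf_subtree p (p + q))"
    unfolding calkin_wilf_subtree_def by auto
next
  fix z
  assume z: "z \<in> insert (p, q) (calkin_wilf_subtree (p + q) q \<union> calkin_wilf_subtree p (p + q))"
  show "z \<in> calkin_wilf_subtree p q"
  proof (cases "z = (p, q)")
    case True
    then show ?thesis
      using assms unfolding calkin_wilf_subtree_def by (auto intro: exI[of _ 0])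
  next
    case False
    then obtain a b n where "z = (a, b)" "0 < a" "0 < b"
      "(euclid_step ^^ n) (a, b) \<in> {(p + q, q), (p, p + q)}"
      using z unfolding calkin_wilf_subtree_def by auto
    moreover have "(euclid_step ^^ Suc n) (a, b) = (p, q)"
      using calculation(4) euclid_step_children[OF assms] by auto
    ultimately show ?thesis
      unfolding calkin_wilf_subtree_def by blast
  qed
qed

lemma calkin_wilf_subtrees_disjoint:
  assumes "0 < p" "0 < q"
  shows "calkin_wilf_subtree (p + q) q \<inter> calkin_wilf_subtree p (p + q) = {}"
proof -
  let ?children = "{(p + q, q), (p, p + q)}"
  have descend: "p + q \<ge> fst ((euclid_step ^^ j) c) + snd ((euclid_step ^^ j) c)"
    if "c \<in> ?children" "0 < j" for c j
  proof -
    obtain i where "j = Suc i" using \<open>0 < j\<close> gr0_implies_Suc by blast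
    then have "(euclid_step ^^ j) c = (euclid_step ^^ i) (p, q)"
      using that(1) euclid_step_children[OF assms]
      by (auto simp: funpow_Suc_right simp del: funpow.simps)
    then show ?thesis
      using funpow_euclid_step_sum_le[of i "(p, q)"] by simp
  qed
  have clash: "False" if "(euclid_step ^^ n) z = c" "(euclid_step ^^ k) z = c'"
    "c \<in> ?children" "c' \<in> ?children" "c \<noteq> c'" "n \<le> k" for z c c' n k
  proof -
    have "(euclid_step ^^ (k - n)) c = (euclid_step ^^ (k - n + n)) z"
      using that(1) by (simp add: funpow_add)
    then have "(euclid_step ^^ (k - n)) c = c'"
      using that(2,6) by simp
    moreover have "0 < k - n"
      using calculation that(5) by (cases "k - n") auto
    ultimately have "fst c' + snd c' \<le> p + q"
      using descend[OF that(3)] by blast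
    then show False
      using that(4) assms by auto
  qed
  show ?thesis
  proof (rule ccontr)
    assume "\<not> ?thesis"
    then obtain z n k where n: "(euclid_step ^^ n) z = (p + q, q)"
      and k: "(euclid_step ^^ k) z = (p, p + q)"
      unfolding calkin_wilf_subtree_def by auto
    have ne: "(p + q, q) \<noteq> (p, p + q)"
      using assms by simp
    consider "n \<le> k" | "k \<le> n" by linarith
    then show False
    proof cases
      case 1
      then show False using clash[OF n k _ _ ne] by simp
    next
      case 2
      then show False using clash[OF k n _ _ ne[symmetric]] by simp
    qed
  qed
qed

lemma euclid_reaches_one_one:
  "0 < a \<Longrightarrow> 0 < b \<Longrightarrow> coprime a b \<Longrightarrow> \<exists>n. (euclid_step ^^ n) (a, b) = (1, 1)"
proof (induction "a + b" arbitrary: a b rule: less_induct)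
  case less
  show ?case
  proof (cases "a = b")
    case True
    then have "(euclid_step ^^ 0) (a, b) = (1, 1)"
      using less.prems(3) by simp
    then show ?thesis ..
  next
    case False
    obtain a' b' where step: "euclid_step (a, b) = (a', b')"
      by force
    have "0 < a'" "0 < b'" "a' + b' < a + b"
      using False less.prems(1,2) step by (auto simp: euclid_step_def split: if_splits)
    moreover have "coprime a' b'"
      using gcd_euclid_step[of "(a, b)"] step less.prems(3) by (simp add: coprime_iff_gcd_eq_1)
    ultimately obtain n where "(euclid_step ^^ n) (a', b') = (1, 1)"
      using less.hyps by blast
    then have "(euclid_step ^^ Suc n) (a, b) = (1, 1)"
      using step by (simp add: funpow_Suc_right del: funpow.simps)
    then show ?thesis ..
  qed
qed

lemma calkin_wilf_subtree_one_one:
  "calkin_wilf_subtree 1 1 = {(a, b). 0 < a \<and> 0 < b \<and> coprime a b}"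
proof (intro equalityI subsetI)
  fix z assume z: "z \<in> calkin_wilf_subtree 1 1"
  obtain a b where ab: "z = (a, b)"
    by force
  then obtain n where "0 < a" "0 < b" and n: "(euclid_step ^^ n) (a, b) = (1, 1)"
    using z unfolding calkin_wilf_subtree_def by blast
  moreover have "gcd a b = 1"
    using gcd_funpow_euclid_step[of n "(a, b)"] unfolding n by simp
  ultimately show "z \<in> {(a, b). 0 < a \<and> 0 < b \<and> coprime a b}"
    using ab by (simp add: coprime_iff_gcd_eq_1)
next
  fix z :: "nat \<times> nat"
  assume "z \<in> {(a, b). 0 < a \<and> 0 < b \<and> coprime a b}"
  then obtain a b where ab: "z = (a, b)" "0 < a" "0 < b" "coprime a b"
    by auto
  moreover obtain n where "(euclid_step ^^ n) (a, b) = (1, 1)"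
    using euclid_reaches_one_one ab(2-4) by blast
  ultimately show "z \<in> calkin_wilf_subtree 1 1"
    unfolding calkin_wilf_subtree_def by blast
qed

lemma sum_calkin_wilf_subtree_unfold:
  fixes F :: "nat \<Rightarrow> nat \<Rightarrow> 'a::comm_monoid_add" and P :: "nat \<Rightarrow> nat \<Rightarrow> 'a"
  assumes rec: "\<And>p q. 0 < p \<Longrightarrow> 0 < q \<Longrightarrow> p + q \<le> d \<Longrightarrow>
      F p q = P p q + F (p + q) q + F p (p + q)"
    and vanish: "\<And>p q. 0 < p \<Longrightarrow> 0 < q \<Longrightarrow> d < p + q \<Longrightarrow> F p q = 0"
    and "0 < p" "0 < q"
  shows "F p q = (\<Sum>(a, b)\<in>calkin_wilf_subtree p q \<inter> {(a, b). a + b \<le> d}. P a b)"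
  using assms(3,4)
proof (induction "Suc d - (p + q)" arbitrary: p q rule: less_induct)
  case less
  let ?T = "\<lambda>p q. calkin_wilf_subtree p q \<inter> {(a, b). a + b \<le> d}"
  show ?case
  proof (cases "d < p + q")
    case True
    then have "?T p q = {}"
      using sum_le_if_in_calkin_wilf_subtree by fastforce
    then show ?thesis
      using vanish[OF less.prems True] by simp
  next
    case False
    have finite: "finite (?T a b)" for a b
      by (rule finite_subset[of _ "{..d} \<times> {..d}"]) auto
    have "?T p q = insert (p, q) (?T (p + q) q \<union> ?T p (p + q))"
      using calkin_wilf_subtree_unfold[OF less.prems] False by auto
    moreover have "?T (p + q) q \<inter> ?T p (p + q) = {}"
      using calkin_wilf_subtrees_disjoint[OF less.prems] by blast
    moreover have "(p, q) \<notin> ?T (p + q) q \<union> ?T p (p + q)"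
      using sum_le_if_in_calkin_wilf_subtree less.prems by fastforce
    ultimately have "(\<Sum>(a, b)\<in>?T p q. P a b) =
        P p q + (\<Sum>(a, b)\<in>?T (p + q) q. P a b) + (\<Sum>(a, b)\<in>?T p (p + q). P a b)"
      using finite by (simp add: sum.union_disjoint add.assoc)
    moreover have "F (p + q) q = (\<Sum>(a, b)\<in>?T (p + q) q. P a b)"
      "F p (p + q) = (\<Sum>(a, b)\<in>?T p (p + q). P a b)"
      using less.hyps less.prems False by auto
    ultimately show ?thesis
      using rec[OF less.prems] False by simp
  qed
qed

lemma sum_coprime_pairs_unfold:
  fixes F :: "nat \<Rightarrow> nat \<Rightarrow> 'a::comm_monoid_add" and P :: "nat \<Rightarrow> nat \<Rightarrow> 'a"
  assumes "\<And>p q. 0 < p \<Longrightarrow> 0 < q \<Longrightarrow> p + q \<le> d \<Longrightarrow>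
      F p q = P p q + F (p + q) q + F p (p + q)"
    and "\<And>p q. 0 < p \<Longrightarrow> 0 < q \<Longrightarrow> d < p + q \<Longrightarrow> F p q = 0"
  shows "F 1 1 = (\<Sum>(a, b)\<in>{(a, b). 0 < a \<and> 0 < b \<and> coprime a b \<and> a + b \<le> d}. P a b)"
proof -
  have "calkin_wilf_subtree 1 1 \<inter> {(a, b). a + b \<le> d} =
      {(a, b). 0 < a \<and> 0 < b \<and> coprime a b \<and> a + b \<le> d}"
    unfolding calkin_wilf_subtree_one_one by auto
  then show ?thesis
    using sum_calkin_wilf_subtree_unfold[of d F P 1 1] assms by simp
qed

section \<open>Meeting invariants\<close>

locale meeting_data = deg: additive deg
  for deg :: "'h::ab_group_add \<Rightarrow> int" +
  fixes E :: "'h set"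
    and N :: "'h \<Rightarrow> 'a::finite \<Rightarrow> real"
    and G :: "real^'a^'a"
    and c2 :: "'a \<Rightarrow> real"
    and m :: "'h \<Rightarrow> 'h \<Rightarrow> real"
  assumes E_add: "x \<in> E \<Longrightarrow> y \<in> E \<Longrightarrow> x + y \<in> E"
    and E_pos: "x \<in> E \<Longrightarrow> pos deg x"
    and E_fin: "finite {x \<in> E. deg x \<le> d}"
    and N_supp: "x \<notin> E \<Longrightarrow> N x a = 0"
    and meeting: "meeting_invariants deg N G c2 m"
begin

lemma pos_iff: "pos deg x \<longleftrightarrow> 0 < deg x"
  using deg.zero by (auto simp: pos_def)

lemma deg_pos_if_in_E: "x \<in> E \<Longrightarrow> 0 < deg x"
  using E_pos pos_iff by blast

lemma m_sym: "m x y = m y x"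
  using conjunct1[OF meeting[unfolded meeting_invariants_def]] by blast

lemma deg_pos_if_m_nonzero: "m x y \<noteq> 0 \<Longrightarrow> 0 < deg x \<and> 0 < deg y"
  using conjunct1[OF conjunct2[OF meeting[unfolded meeting_invariants_def]]] by force

lemma m_recursion:
  "0 < deg x \<Longrightarrow> 0 < deg y \<Longrightarrow> x \<noteq> y \<Longrightarrow>
    m x y = pairing N G x y + m x (y - x) + m (x - y) y"
  using conjunct1[OF conjunct2[OF conjunct2[OF meeting[unfolded meeting_invariants_def]]]]
  unfolding pos_iff by blast

lemma in_E_if_pairing_nonzero:
  assumes "pairing N G x y \<noteq> 0"
  shows "x \<in> E \<and> y \<in> E"
proof (rule ccontr)
  assume "\<not> (x \<in> E \<and> y \<in> E)"
  then have "pairing N G x y = 0"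
    unfolding pairing_def by (auto simp: N_supp)
  with assms show False
    by simp
qed

text \<open>Induction on \<open>deg x + deg y\<close>: the recursion for \<open>m\<close> passes to \<open>(x, y - x)\<close> with
  weights \<open>(p + q, q)\<close> or to \<open>(y, x - y)\<close> with weights \<open>(p + q, p)\<close>, which keeps the linear
  relation, and \<open>al x \<noteq> 0\<close> excludes the diagonal \<open>x = y\<close>.\<close>
lemma in_E_if_meeting_nonzero:
  assumes "Modules.additive al" \<comment> \<open>unqualified, \<open>additive\<close> is additivity of set functions\<close>
    and "0 < p" "0 < q" "real p * al x + real q * al y = 0"
    and "al x \<noteq> 0" "m x y \<noteq> 0"
  shows "x \<in> E \<and> y \<in> E"
  using assms(2-)
proof (induction "nat (deg x + deg y)" arbitrary: x y p q rule: less_induct)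
  case less
  interpret al: additive al by (fact assms(1))
  have deg: "0 < deg x" "0 < deg y"
    using deg_pos_if_m_nonzero[OF less.prems(5)] by simp_all
  have "real q * al y = - (real p * al x)"
    using less.prems(3) by linarith
  then have "al y \<noteq> 0"
    using less.prems(1,4) by auto
  have "x \<noteq> y"
  proof
    assume "x = y"
    then have "(real p + real q) * al x = 0"
      using less.prems(3) by (simp add: distrib_right)
    then show False
      using less.prems(1,4) by simp
  qed
  then have "m x y = pairing N G x y + m x (y - x) + m (x - y) y"
    using m_recursion deg by blast
  then consider "pairing N G x y \<noteq> 0" | "m x (y - x) \<noteq> 0" | "m (x - y) y \<noteq> 0"
    using less.prems(5) by fastforce
  then show ?case
  proof cases
    case 1
    then show ?thesis by (rule in_E_if_pairing_nonzero)
  next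
    case 2
    have "real (p + q) * al x + real q * al (y - x) = 0"
      using less.prems(3) by (simp add: al.diff algebra_simps)
    moreover have "nat (deg x + deg (y - x)) < nat (deg x + deg y)"
      using deg deg_pos_if_m_nonzero[OF 2] by (simp add: deg.diff)
    ultimately have "x \<in> E \<and> y - x \<in> E"
      using less.hyps[of x "y - x" "p + q" q] less.prems 2 by simp
    then show ?thesis
      using E_add[of x "y - x"] by simp
  next
    case 3
    then have "m y (x - y) \<noteq> 0"
      by (simp add: m_sym)
    have "real (p + q) * al y + real p * al (x - y) = 0"
      using less.prems(3) by (simp add: al.diff algebra_simps)
    moreover have "nat (deg y + deg (x - y)) < nat (deg x + deg y)"
      using deg deg_pos_if_m_nonzero[OF 3] by (simp add: deg.diff)
    ultimately have "y \<in> E \<and> x - y \<in> E"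
      using less.hyps[of y "x - y" "p + q" p] less.prems \<open>al y \<noteq> 0\<close> \<open>m y (x - y) \<noteq> 0\<close> by simp
    then show ?thesis
      using E_add[of "x - y" y] by simp
  qed
qed

end

section \<open>Sums over the splittings of \<open>\<beta>\<close>\<close>

locale orthogonal_class = meeting_data deg E N G c2 m + al: additive al
  for deg :: "'h::ab_group_add \<Rightarrow> int" and E N G c2 m and al :: "'h \<Rightarrow> real" +
  fixes \<beta> :: 'h
  assumes orth: "al \<beta> = 0"
begin

lemma al_scaleN: "al (scaleN k x) = real k * al x"
  by (simp add: al.scaleN scaleN_eq_of_nat_mult)

lemma deg_scaleN: "deg (scaleN k x) = int k * deg x"
  by (simp add: deg.scaleN scaleN_eq_of_nat_mult)

definition splittings :: "nat \<Rightarrow> nat \<Rightarrow> ('h \<times> 'h) set" where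
  "splittings p q = {(x, y). x \<in> E \<and> y \<in> E \<and> scaleN p x + scaleN q y = \<beta>}"

text \<open>\<open>weighted_sum p q m\<close> and \<open>weighted_sum p q (pairing N G)\<close> are the sums \<open>F(p, q)\<close> and
  \<open>P(p, q)\<close> of the proof idea.\<close>
definition weighted_sum :: "nat \<Rightarrow> nat \<Rightarrow> ('h \<Rightarrow> 'h \<Rightarrow> real) \<Rightarrow> real" where
  "weighted_sum p q f = (\<Sum>(x, y)\<in>splittings p q. al x * al y / (real p * real q) * f x y)"

lemma splittings_al: "(x, y) \<in> splittings p q \<Longrightarrow> real p * al x + real q * al y = 0"
  unfolding splittings_def using orth by (auto simp: al.add al_scaleN)

lemma splittings_deg:
  assumes "(x, y) \<in> splittings p q" "0 < p" "0 < q"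
  shows "int p + int q \<le> deg \<beta>" "deg x \<le> deg \<beta>" "deg y \<le> deg \<beta>"
proof -
  have x: "0 < deg x" and y: "0 < deg y" and "int p * deg x + int q * deg y = deg \<beta>"
    using assms(1) deg_pos_if_in_E unfolding splittings_def by (auto simp: deg.add deg_scaleN)
  moreover have "int p \<le> int p * deg x" "int q \<le> int q * deg y"
    "deg x \<le> int p * deg x" "deg y \<le> int q * deg y"
    using x y assms(2,3) by simp_all
  ultimately show "int p + int q \<le> deg \<beta>" "deg x \<le> deg \<beta>" "deg y \<le> deg \<beta>"
    by linarith+
qed

lemma finite_splittings:
  assumes "0 < p" "0 < q"
  shows "finite (splittings p q)"
proof (rule finite_subset)
  show "splittings p q \<subseteq> {x \<in> E. deg x \<le> deg \<beta>} \<times> {x \<in> E. deg x \<le> deg \<beta>}"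
    using splittings_deg[OF _ assms] unfolding splittings_def by blast
qed (simp add: E_fin)

lemma splittings_empty:
  "0 < p \<Longrightarrow> 0 < q \<Longrightarrow> nat (deg \<beta>) < p + q \<Longrightarrow> splittings p q = {}"
  using splittings_deg by fastforce

lemma weighted_sum_swap: "weighted_sum q p f = weighted_sum p q (\<lambda>x y. f y x)"
proof -
  have "splittings q p = prod.swap ` splittings p q"
    unfolding splittings_def by (auto simp: add.commute)
  then show ?thesis
    unfolding weighted_sum_def by (simp add: sum.reindex mult.commute)
qed

lemma shift_in_splittings:
  assumes "(x, y) \<in> splittings p q" "0 < p" "0 < q" "al x \<noteq> 0" "m x (y - x) \<noteq> 0"
  shows "(x, y - x) \<in> splittings (p + q) q"
proof -
  have "real (p + q) * al x + real q * al (y - x) = 0"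
    using splittings_al[OF assms(1)] by (simp add: al.diff algebra_simps)
  then have "x \<in> E \<and> y - x \<in> E"
    using in_E_if_meeting_nonzero[OF al.additive_axioms, of "p + q" q x "y - x"] assms by simp
  then show ?thesis
    using assms(1) unfolding splittings_def by (auto simp: scaleN_add_left scaleN_diff_right)
qed

lemma weighted_sum_shift:
  assumes "0 < p" "0 < q"
  shows "weighted_sum p q (\<lambda>x y. m x (y - x)) = weighted_sum (p + q) q m"
proof -
  define shift where "shift = (\<lambda>(x :: 'h, y). (x, y + x))"
  define g where "g = (\<lambda>(x, y). al x * al y / (real p * real q) * m x (y - x))"
  have "shift ` splittings (p + q) q \<subseteq> splittings p q"
    unfolding shift_def splittings_def
    by (auto simp: E_add scaleN_add_left scaleN_add_right algebra_simps)
  moreover have "g z = 0" if "z \<in> splittings p q - shift ` splittings (p + q) q" for z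
  proof (rule ccontr)
    obtain x y where z: "z = (x, y)" by force
    assume "g z \<noteq> 0"
    then have "(x, y - x) \<in> splittings (p + q) q"
      using that shift_in_splittings assms unfolding g_def z by auto
    then have "z \<in> shift ` splittings (p + q) q"
      unfolding shift_def z by force
    with that show False by simp
  qed
  ultimately have "weighted_sum p q (\<lambda>x y. m x (y - x)) = sum g (shift ` splittings (p + q) q)"
    unfolding weighted_sum_def g_def
    by (intro sum.mono_neutral_right finite_splittings assms) auto
  also have "\<dots> = sum (g \<circ> shift) (splittings (p + q) q)"
    by (rule sum.reindex) (auto simp: shift_def inj_on_def)
  also have "\<dots> = weighted_sum (p + q) q m"
    unfolding weighted_sum_def
  proof (rule sum.cong[OF refl], clarify)
    fix x y assume "(x, y) \<in> splittings (p + q) q"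
    then have rel: "(real p + real q) * al x + real q * al y = 0"
      using splittings_al by fastforce
    have "al x * (al y + al x) * ((real p + real q) * real q) - al x * al y * (real p * real q)
        = al x * real q * ((real p + real q) * al x + real q * al y)"
      by (simp add: algebra_simps)
    then have "al x * al (y + x) * (real (p + q) * real q) = al x * al y * (real p * real q)"
      unfolding rel by (simp add: al.add)
    then have weight:
      "al x * al (y + x) / (real p * real q) = al x * al y / (real (p + q) * real q)"
      using assms by (simp add: frac_eq_eq)
    have "(g \<circ> shift) (x, y) = al x * al (y + x) / (real p * real q) * m x y"
      unfolding g_def shift_def by simp
    then show "(g \<circ> shift) (x, y) = al x * al y / (real (p + q) * real q) * m x y"
      unfolding weight .
  qed
  finally show ?thesis .
qed

lemma weighted_sum_recursion:
  assumes "0 < p" "0 < q"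
  shows "weighted_sum p q m =
    weighted_sum p q (pairing N G) + weighted_sum (p + q) q m + weighted_sum p (p + q) m"
proof -
  have termwise: "al x * al y / (real p * real q) * m x y =
      al x * al y / (real p * real q) * pairing N G x y
      + al x * al y / (real p * real q) * m x (y - x)
      + al x * al y / (real p * real q) * m (x - y) y"
    if xy: "(x, y) \<in> splittings p q" for x y
  proof (cases "x = y")
    case True
    then have "(real p + real q) * al x = 0"
      using splittings_al[OF xy] by (simp add: distrib_right)
    then show ?thesis
      using assms by simp
  next
    case False
    have "x \<in> E" "y \<in> E"
      using xy unfolding splittings_def by auto
    then show ?thesis
      using m_recursion[OF deg_pos_if_in_E deg_pos_if_in_E False] by (simp add: distrib_left)
  qed
  have flip: "(\<lambda>x y. m y x) = m" "(\<lambda>x y. m y (x - y)) = (\<lambda>x y. m (x - y) y)"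
    by (intro ext, rule m_sym)+
  have "weighted_sum p q (\<lambda>x y. m (x - y) y) = weighted_sum q p (\<lambda>x y. m x (y - x))"
    using weighted_sum_swap[of q p "\<lambda>x y. m x (y - x)"] unfolding flip by simp
  also have "\<dots> = weighted_sum (q + p) p m"
    by (rule weighted_sum_shift[OF assms(2,1)])
  also have "\<dots> = weighted_sum p (q + p) (\<lambda>x y. m y x)"
    by (rule weighted_sum_swap)
  also have "\<dots> = weighted_sum p (p + q) m"
    by (simp only: flip add.commute)
  finally have "weighted_sum p q (\<lambda>x y. m (x - y) y) = weighted_sum p (p + q) m" .
  moreover have "weighted_sum p q m = weighted_sum p q (pairing N G)
      + weighted_sum p q (\<lambda>x y. m x (y - x)) + weighted_sum p q (\<lambda>x y. m (x - y) y)"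
    unfolding weighted_sum_def sum.distrib[symmetric]
    by (rule sum.cong) (auto dest: termwise)
  ultimately show ?thesis
    using weighted_sum_shift[OF assms] by simp
qed

lemma weighted_sum_meeting_eq_sum_coprime:
  "weighted_sum 1 1 m = (\<Sum>(a, b)\<in>{(a, b). 0 < a \<and> 0 < b \<and> coprime a b \<and> a + b \<le> nat (deg \<beta>)}.
     weighted_sum a b (pairing N G))"
  by (rule sum_coprime_pairs_unfold[where F = "\<lambda>p q. weighted_sum p q m"])
    (blast intro: weighted_sum_recursion, simp add: weighted_sum_def splittings_empty)

lemma infsum_meeting_eq_weighted_sum:
  "(\<Sum>\<^sub>\<infinity>b\<in>{b. pos deg b \<and> pos deg (\<beta> - b)}. al b * al (\<beta> - b) * m b (\<beta> - b))
    = weighted_sum 1 1 m"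
proof -
  define S where "S = {b. b \<in> E \<and> \<beta> - b \<in> E}"
  have splittings_one_one: "splittings 1 1 = (\<lambda>b. (b, \<beta> - b)) ` S"
    unfolding splittings_def S_def by (force simp: algebra_simps)
  have "finite ((\<lambda>b. (b, \<beta> - b)) ` S)"
    using finite_splittings[of 1 1] unfolding splittings_one_one by simp
  then have "finite S"
    by (rule finite_imageD) (simp add: inj_on_def)
  moreover have "S \<subseteq> {b. pos deg b \<and> pos deg (\<beta> - b)}"
    unfolding S_def using E_pos by blast
  moreover have "al b * al (\<beta> - b) * m b (\<beta> - b) = 0"
    if "b \<in> {b. pos deg b \<and> pos deg (\<beta> - b)} - S" for b
  proof (rule ccontr)
    assume "al b * al (\<beta> - b) * m b (\<beta> - b) \<noteq> 0"
    moreover have "real 1 * al b + real 1 * al (\<beta> - b) = 0"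
      using orth by (simp add: al.diff)
    ultimately have "b \<in> S"
      using in_E_if_meeting_nonzero[OF al.additive_axioms, of 1 1 b "\<beta> - b"] unfolding S_def by simp
    with that show False by simp
  qed
  ultimately have "(\<Sum>\<^sub>\<infinity>b\<in>{b. pos deg b \<and> pos deg (\<beta> - b)}. al b * al (\<beta> - b) * m b (\<beta> - b))
      = (\<Sum>b\<in>S. al b * al (\<beta> - b) * m b (\<beta> - b))"
    by (rule infsum_eq_sum_on_support)
  also have "\<dots> = weighted_sum 1 1 m"
    unfolding weighted_sum_def splittings_one_one by (simp add: sum.reindex inj_on_def)
  finally show ?thesis .
qed

lemma infsum_pairing_eq_sum_coprime:
  "(\<Sum>\<^sub>\<infinity>(k1, k2, g1, g2)\<in>{(k1::nat, k2::nat, g1::'h, g2::'h).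
       0 < k1 \<and> 0 < k2 \<and> coprime k1 k2 \<and>
       pos deg (scaleN k1 g1) \<and> pos deg (scaleN k2 g2) \<and>
       scaleN k1 g1 + scaleN k2 g2 = \<beta>}.
     al (scaleN k1 g1) * al (scaleN k2 g2) / (real k1 ^ 2 * real k2 ^ 2) * pairing N G g1 g2)
   = (\<Sum>(a, b)\<in>{(a, b). 0 < a \<and> 0 < b \<and> coprime a b \<and> a + b \<le> nat (deg \<beta>)}.
     weighted_sum a b (pairing N G))"
  (is "infsum ?h ?T = sum _ ?C")
proof -
  define flat where "flat = (\<lambda>((k1 :: nat, k2 :: nat), (g1 :: 'h, g2 :: 'h)). (k1, k2, g1, g2))"
  define \<Sigma> where "\<Sigma> = (SIGMA k:?C. splittings (fst k) (snd k))"
  have "finite ?C"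
    by (rule finite_subset[of _ "{..nat (deg \<beta>)} \<times> {..nat (deg \<beta>)}"]) auto
  moreover have finite_fibres: "\<forall>k\<in>?C. finite (splittings (fst k) (snd k))"
    using finite_splittings by auto
  ultimately have "finite \<Sigma>"
    unfolding \<Sigma>_def by blast
  have inj: "inj_on flat \<Sigma>"
    unfolding flat_def inj_on_def by auto
  have "flat ` \<Sigma> \<subseteq> ?T"
    unfolding flat_def \<Sigma>_def splittings_def
    by (auto simp: pos_iff deg_scaleN deg_pos_if_in_E)
  moreover have "?h t = 0" if "t \<in> ?T - flat ` \<Sigma>" for t
  proof (rule ccontr)
    obtain k1 k2 g1 g2 where t: "t = (k1, k2, g1, g2)"
      by (cases t) auto
    have k: "0 < k1" "0 < k2" "coprime k1 k2" and sum: "scaleN k1 g1 + scaleN k2 g2 = \<beta>"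
      using that unfolding t by auto
    assume "?h t \<noteq> 0"
    then have "pairing N G g1 g2 \<noteq> 0"
      unfolding t by auto
    then have g: "(g1, g2) \<in> splittings k1 k2"
      using in_E_if_pairing_nonzero sum unfolding splittings_def by auto
    then have "k1 + k2 \<le> nat (deg \<beta>)"
      using splittings_empty[OF k(1,2)] by (metis empty_iff not_le)
    then have "((k1, k2), (g1, g2)) \<in> \<Sigma>"
      unfolding \<Sigma>_def using k g by simp
    then have "t \<in> flat ` \<Sigma>"
      unfolding t flat_def by force
    with that show False by simp
  qed
  ultimately have "infsum ?h ?T = sum ?h (flat ` \<Sigma>)"
    using \<open>finite \<Sigma>\<close> by (intro infsum_eq_sum_on_support) auto
  also have "\<dots> = sum (?h \<circ> flat) \<Sigma>"
    by (rule sum.reindex[OF inj])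
  also have "\<dots> = (\<Sum>k\<in>?C. \<Sum>g\<in>splittings (fst k) (snd k). ?h (flat (k, g)))"
    unfolding \<Sigma>_def by (subst sum.Sigma) (use \<open>finite ?C\<close> finite_fibres in auto)
  also have "\<dots> = (\<Sum>k\<in>?C. weighted_sum (fst k) (snd k) (pairing N G))"
  proof (rule sum.cong[OF refl])
    fix k assume "k \<in> ?C"
    then obtain a b where k: "k = (a, b)" "0 < a" "0 < b"
      by auto
    have weight: "al (scaleN a x) * al (scaleN b y) * c / (real a ^ 2 * real b ^ 2)
        = al x * al y * c / (real a * real b)" for x y c
      using k(2,3) by (simp add: al_scaleN power2_eq_square)
    show "(\<Sum>g\<in>splittings (fst k) (snd k). ?h (flat (k, g)))
        = weighted_sum (fst k) (snd k) (pairing N G)"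
      unfolding weighted_sum_def flat_def k(1) by (simp add: split_def weight)
  qed
  also have "\<dots> = (\<Sum>(a, b)\<in>?C. weighted_sum a b (pairing N G))"
    by (simp add: split_def)
  finally show ?thesis .
qed

end

theorem lemma2p3:
  fixes deg :: "'h::ab_group_add \<Rightarrow> int"
    and al :: "'h \<Rightarrow> real"
    and E :: "'h set"
    and N :: "'h \<Rightarrow> 'a::finite \<Rightarrow> real"
    and G :: "real^'a^'a"
    and c2 alsq :: "'a \<Rightarrow> real"
    and m :: "'h \<Rightarrow> 'h \<Rightarrow> real"
    and \<beta> :: 'h
  assumes deg_add: "\<And>x y. deg (x + y) = deg x + deg y"
    and al_add: "\<And>x y. al (x + y) = al x + al y"
    and E_add: "\<And>x y. x \<in> E \<Longrightarrow> y \<in> E \<Longrightarrow> x + y \<in> E"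
    and E_pos: "\<And>x. x \<in> E \<Longrightarrow> pos deg x"
    and E_fin: "\<And>d. finite {x \<in> E. deg x \<le> d}"
    and N_supp: "\<And>x a. x \<notin> E \<Longrightarrow> N x a = 0"
    and G_sym: "transpose G = G"
    and G_inv: "invertible G"
    and m_def: "meeting_invariants deg N G c2 m"
    and orth: "al \<beta> = 0"
  shows "(nGW N \<beta> alsq =
            1/2 * (\<Sum>\<^sub>\<infinity>b1\<in>{b1. pos deg b1 \<and> pos deg (\<beta> - b1)}.
                      al b1 * al (\<beta> - b1) * m b1 (\<beta> - b1)))
     \<longleftrightarrow>
         (nGW N \<beta> alsq =
            1/2 * (\<Sum>\<^sub>\<infinity>(k1, k2, g1, g2)\<in>{(k1::nat, k2::nat, g1::'h, g2::'h).
                       0 < k1 \<and> 0 < k2 \<and> coprime k1 k2 \<and>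
                       pos deg (scaleN k1 g1) \<and> pos deg (scaleN k2 g2) \<and>
                       scaleN k1 g1 + scaleN k2 g2 = \<beta>}.
                    al (scaleN k1 g1) * al (scaleN k2 g2) / (real k1 ^ 2 * real k2 ^ 2)
                      * pairing N G g1 g2))"
proof -
  interpret orthogonal_class deg E N G c2 m al \<beta>
    by unfold_locales (simp_all add: deg_add al_add E_add E_pos E_fin N_supp m_def orth)
  show ?thesis
    using infsum_meeting_eq_weighted_sum weighted_sum_meeting_eq_sum_coprime
      infsum_pairing_eq_sum_coprime
    by simp
qed

end
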